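(* Let $k$ be a field and let $A$ be a graded Artinian $k$-algebra with a strong Lefschetz element $\ell\in A_1$. Then for every integer $j>0$, the algebra $A/[0:(\ell^j)]$ has the strong Lefschetz property, with (the image of) $\ell$ as a strong Lefschetz element.
   Context: A graded Artinian $k$-algebra $A$ has the strong Lefschetz property (SLP) if there exists $\ell\in A_1$ such that for all integers $i$ and $j\ge 0$ the multiplication map $\cdot\ell^j\colon A_i\to A_{i+j}$ has maximal rank (is injective or surjective); such $\ell$ is called a strong Lefschetz element. Here $0:(\ell^j)=\{a\in A\mid a\ell^j=0\}$. *)

theory Defs
  imports "HOL-Algebra.Algebra"
begin

definition graded_artinian_algebra ::
  "('a, 'b) ring_scheme \<Rightarrow> 'a set \<Rightarrow> (nat \<Rightarrow> 'a set) \<Rightarrow> bool" where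
  "graded_artinian_algebra R K G \<longleftrightarrow>
     cring R \<and> subfield K R \<and> ring.finite_dimension R K (carrier R) \<and>
     (\<forall>i. subalgebra K (G i) R) \<and>
     (\<forall>i j. \<forall>a\<in>G i. \<forall>b\<in>G j. a \<otimes>\<^bsub>R\<^esub> b \<in> G (i + j)) \<and>
     G 0 = K \<and>
     (\<forall>a\<in>carrier R. \<exists>!f. (\<forall>i. f i \<in> G i) \<and> finite {i. f i \<noteq> \<zero>\<^bsub>R\<^esub>} \<and>
                            a = finsum R f {i. f i \<noteq> \<zero>\<^bsub>R\<^esub>})"

definition strong_lefschetz_element ::
  "('a, 'b) ring_scheme \<Rightarrow> (nat \<Rightarrow> 'a set) \<Rightarrow> 'a \<Rightarrow> bool" where
  "strong_lefschetz_element R G l \<longleftrightarrow>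
     l \<in> G 1 \<and>
     (\<forall>i j. inj_on (\<lambda>a. a \<otimes>\<^bsub>R\<^esub> (l [^]\<^bsub>R\<^esub> (j::nat))) (G i) \<or>
            (\<lambda>a. a \<otimes>\<^bsub>R\<^esub> (l [^]\<^bsub>R\<^esub> (j::nat))) ` G i = G (i + j))"

definition annihilator :: "('a, 'b) ring_scheme \<Rightarrow> 'a \<Rightarrow> 'a set" where
  "annihilator R x = {a \<in> carrier R. a \<otimes>\<^bsub>R\<^esub> x = \<zero>\<^bsub>R\<^esub>}"

end

theory Submission
  imports Defs
begin

text \<open>Put L = l^j and I = 0 : L. Multiplication by L identifies A/I with the ideal L A, since
  x + I = y + I exactly when x L = y L. Under this identification, multiplication by l^k from
  degree i of A/I becomes multiplication by l^(k+j) from degree i of A, so maximal rank is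
  inherited. Since L is homogeneous, I is a homogeneous ideal: a relation sum x_i L = sum y_i L
  with x_i, y_i of degree i splits into the degrees i + j, so the grading of A descends to A/I.\<close>

definition graded_decomposition ::
  "('a, 'b) ring_scheme \<Rightarrow> (nat \<Rightarrow> 'a set) \<Rightarrow> 'a \<Rightarrow> (nat \<Rightarrow> 'a) \<Rightarrow> bool" where
  "graded_decomposition R G a f \<longleftrightarrow>
     (\<forall>i. f i \<in> G i) \<and> finite {i. f i \<noteq> \<zero>\<^bsub>R\<^esub>} \<and> a = finsum R f {i. f i \<noteq> \<zero>\<^bsub>R\<^esub>}"

context abelian_monoid
begin

lemma graded_decomposition_finsum_superset:
  assumes "graded_decomposition G D a f" "\<And>i. D i \<subseteq> carrier G"
    and "finite S" "{i. f i \<noteq> \<zero>} \<subseteq> S"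
  shows "a = finsum G f S"
proof -
  have "finsum G f {i. f i \<noteq> \<zero>} = finsum G f S"
    by (rule add.finprod_mono_neutral_cong_left)
      (use assms in \<open>auto simp: graded_decomposition_def\<close>)
  then show ?thesis
    using assms(1) by (simp add: graded_decomposition_def)
qed

lemma graded_decomposition_extend_zero:
  assumes "\<And>i. \<zero> \<in> D i" "\<And>i. D i \<subseteq> carrier G"
    and "finite S" "\<And>i. i \<in> S \<Longrightarrow> c i \<in> D i"
  shows "graded_decomposition G D (finsum G c S) (\<lambda>i. if i \<in> S then c i else \<zero>)"
proof -
  let ?f = "\<lambda>i. if i \<in> S then c i else \<zero>"
  have support: "{i. ?f i \<noteq> \<zero>} \<subseteq> S"
    by auto
  have c_carrier: "\<And>i. i \<in> S \<Longrightarrow> c i \<in> carrier G"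
    using assms(2,4) by blast
  have "finsum G ?f {i. ?f i \<noteq> \<zero>} = finsum G ?f S"
    by (rule add.finprod_mono_neutral_cong_left) (use assms(3) support c_carrier in auto)
  also have "\<dots> = finsum G c S"
    by (rule finsum_cong') (use assms in auto)
  finally show ?thesis
    unfolding graded_decomposition_def
    using assms support finite_subset by auto
qed

lemma graded_decomposition_unique_components:
  assumes "\<forall>a \<in> carrier G. \<exists>!f. graded_decomposition G D a f"
    and "\<And>i. \<zero> \<in> D i" "\<And>i. D i \<subseteq> carrier G"
    and "finite S" "\<And>i. i \<in> S \<Longrightarrow> c i \<in> D i" "\<And>i. i \<in> S \<Longrightarrow> d i \<in> D i"
    and "finsum G c S = finsum G d S" "i \<in> S"
  shows "c i = d i"
proof -
  let ?c = "\<lambda>i. if i \<in> S then c i else \<zero>" and ?d = "\<lambda>i. if i \<in> S then d i else \<zero>"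
  have "c \<in> S \<rightarrow> carrier G"
    using assms(3,5) by blast
  then have "\<exists>!f. graded_decomposition G D (finsum G c S) f"
    using assms(1) finsum_closed by blast
  then obtain f where unique: "\<And>g. graded_decomposition G D (finsum G c S) g \<Longrightarrow> g = f"
    by blast
  have "?c = f" "?d = f"
    using unique graded_decomposition_extend_zero[OF assms(2-4), of c]
      graded_decomposition_extend_zero[OF assms(2-4), of d] assms(5-7) by simp_all
  then have "?c = ?d"
    by (rule trans[OF _ sym])
  then show ?thesis
    using fun_cong[of ?c ?d i] assms(8) by simp
qed

lemma ex1_graded_decompositionI:
  assumes "\<And>i. D i \<subseteq> carrier G" and "graded_decomposition G D a f"
    and "\<And>S c d i. finite S \<Longrightarrow> (\<And>i. i \<in> S \<Longrightarrow> c i \<in> D i) \<Longrightarrow> (\<And>i. i \<in> S \<Longrightarrow> d i \<in> D i)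
           \<Longrightarrow> finsum G c S = finsum G d S \<Longrightarrow> i \<in> S \<Longrightarrow> c i = d i"
  shows "\<exists>!f. graded_decomposition G D a f"
proof (rule ex1I[of _ f])
  fix g assume g: "graded_decomposition G D a g"
  define S where "S = {i. f i \<noteq> \<zero>} \<union> {i. g i \<noteq> \<zero>}"
  have S: "finite S"
    using assms(2) g by (simp add: S_def graded_decomposition_def)
  have sums: "finsum G g S = finsum G f S"
    using graded_decomposition_finsum_superset[OF g assms(1) S]
      graded_decomposition_finsum_superset[OF assms(2,1) S] by (auto simp: S_def)
  have on_S: "g i = f i" if "i \<in> S" for i
    by (rule assms(3)[OF S _ _ sums that]) (use assms(2) g in \<open>auto simp: graded_decomposition_def\<close>)
  show "g = f"
  proof
    fix i
    show "g i = f i"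
      using on_S[of i] by (cases "i \<in> S") (auto simp: S_def)
  qed
qed (use assms(2) in simp)

end

lemma (in ring_hom_ring) graded_decomposition_hom:
  assumes "graded_decomposition R D a f" "\<And>i. D i \<subseteq> carrier R"
  shows "graded_decomposition S (\<lambda>i. h ` D i) (h a) (h \<circ> f)"
proof -
  have f: "\<forall>i. f i \<in> D i" "finite {i. f i \<noteq> \<zero>}" "a = finsum R f {i. f i \<noteq> \<zero>}"
    using assms(1) by (simp_all add: graded_decomposition_def)
  have f_carrier: "f i \<in> carrier R" for i
    using f(1) assms(2) by blast
  have support: "{i. (h \<circ> f) i \<noteq> \<zero>\<^bsub>S\<^esub>} \<subseteq> {i. f i \<noteq> \<zero>}"
    by auto
  have "finsum S (h \<circ> f) {i. (h \<circ> f) i \<noteq> \<zero>\<^bsub>S\<^esub>} = finsum S (h \<circ> f) {i. f i \<noteq> \<zero>}"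
    by (rule S.add.finprod_mono_neutral_cong_left) (use f(2) f_carrier in auto)
  also have "\<dots> = h (finsum R f {i. f i \<noteq> \<zero>})"
    by (rule hom_finsum[symmetric]) (use f_carrier in auto)
  also have "\<dots> = h a"
    using f(3) by simp
  finally show ?thesis
    unfolding graded_decomposition_def using f(1,2) support finite_subset by auto
qed

lemma (in ring_hom_ring) finite_dimension_hom:
  assumes "subfield K R" "\<one>\<^bsub>S\<^esub> \<noteq> \<zero>\<^bsub>S\<^esub>" "R.finite_dimension K E"
  shows "finite_dimension (h ` K) (h ` E)"
proof -
  obtain n where "R.dimension n K E"
    using assms(3) by (rule R.finite_dimensionE')
  then obtain Vs where Vs: "set Vs \<subseteq> carrier R" "R.Span K Vs = E"
    using R.exists_base[OF assms(1)] by blast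
  have "Span (h ` K) (map h Vs) = h ` E"
    using Span_hom[OF subfieldE(3)[OF assms(1)] Vs(1)] Vs(2) by simp
  moreover have "set (map h Vs) \<subseteq> carrier S"
    using Vs(1) by auto
  ultimately show ?thesis
    using Span_finite_dimension[OF img_is_subfield(2)[OF assms(1,2)]] by metis
qed

lemma carrier_FactRing: "carrier (R Quot I) = a_r_coset R I ` carrier R"
  by (auto simp: FactRing_def A_RCOSETS_def')

locale annihilator_quotient = cring R for R (structure) +
  fixes L
  assumes L_closed: "L \<in> carrier R"
begin

abbreviation I where "I \<equiv> annihilator R L"

lemma ideal_annihilator: "ideal I R"
proof (rule idealI)
  show "subgroup I (add_monoid R)"
    by (rule add.subgroupI) (use L_closed in \<open>auto simp: annihilator_def l_distr l_minus\<close>)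
  show "x \<otimes> a \<in> I" "a \<otimes> x \<in> I" if "a \<in> I" "x \<in> carrier R" for a x
  proof -
    have a: "a \<in> carrier R" "a \<otimes> L = \<zero>"
      using that(1) by (simp_all add: annihilator_def)
    have "(x \<otimes> a) \<otimes> L = x \<otimes> (a \<otimes> L)" "(a \<otimes> x) \<otimes> L = x \<otimes> (a \<otimes> L)"
      using a(1) that(2) L_closed by algebra+
    then show "x \<otimes> a \<in> I" "a \<otimes> x \<in> I"
      using a that(2) by (simp_all add: annihilator_def)
  qed
qed (rule ring_axioms)

lemma rcos_annihilator_eq_iff:
  assumes "x \<in> carrier R" "y \<in> carrier R"
  shows "I +> x = I +> y \<longleftrightarrow> x \<otimes> L = y \<otimes> L"
proof -
  have "I +> x = I +> y \<longleftrightarrow> x \<ominus> y \<in> I"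
    using quotient_eq_iff_same_a_r_cos[OF ideal_annihilator assms] by simp
  also have "\<dots> \<longleftrightarrow> x \<otimes> L \<ominus> y \<otimes> L = \<zero>"
    using assms L_closed by (simp add: annihilator_def l_minus minus_eq l_distr)
  finally show ?thesis
    using assms L_closed by simp
qed

lemma rcos_ring_hom_ring: "ring_hom_ring R (R Quot I) ((+>) I)"
  using ideal.rcos_ring_hom_ring[OF ideal_annihilator] .

lemma Quot_annihilator_nontrivial:
  assumes "L \<noteq> \<zero>"
  shows "\<one>\<^bsub>R Quot I\<^esub> \<noteq> \<zero>\<^bsub>R Quot I\<^esub>"
proof -
  interpret \<pi>: ring_hom_ring R "R Quot I" "(+>) I"
    by (rule rcos_ring_hom_ring)
  have "I +> \<one> \<noteq> I +> \<zero>"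
    using rcos_annihilator_eq_iff[of \<one> \<zero>] L_closed assms by simp
  then show ?thesis
    by simp
qed

lemma inj_on_Quot_annihilator_mult:
  assumes "A \<subseteq> carrier R" "m \<in> carrier R" and inj: "inj_on (\<lambda>a. a \<otimes> (m \<otimes> L)) A"
  shows "inj_on (\<lambda>u. u \<otimes>\<^bsub>R Quot I\<^esub> (I +> m)) ((+>) I ` A)"
proof (rule inj_onI)
  interpret \<pi>: ring_hom_ring R "R Quot I" "(+>) I"
    by (rule rcos_ring_hom_ring)
  fix u v
  assume "u \<in> (+>) I ` A" "v \<in> (+>) I ` A"
    and eq: "u \<otimes>\<^bsub>R Quot I\<^esub> (I +> m) = v \<otimes>\<^bsub>R Quot I\<^esub> (I +> m)"
  then obtain a b where ab: "a \<in> A" "b \<in> A" "u = I +> a" "v = I +> b"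
    by blast
  then have carrier: "a \<in> carrier R" "b \<in> carrier R" "a \<otimes> m \<in> carrier R" "b \<otimes> m \<in> carrier R"
    using assms(1,2) by auto
  have "I +> (a \<otimes> m) = I +> (b \<otimes> m)"
    using eq ab carrier assms(2) by simp
  then have "(a \<otimes> m) \<otimes> L = (b \<otimes> m) \<otimes> L"
    using rcos_annihilator_eq_iff carrier by blast
  then have "a \<otimes> (m \<otimes> L) = b \<otimes> (m \<otimes> L)"
    using carrier assms(2) L_closed by (simp add: m_assoc)
  then show "u = v"
    using inj_onD[OF inj _ ab(1,2)] ab(3,4) by simp
qed

lemma image_Quot_annihilator_mult:
  assumes "A \<subseteq> carrier R" "B \<subseteq> carrier R" "m \<in> carrier R"
    and into: "(\<lambda>a. a \<otimes> m) ` A \<subseteq> B"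
    and onto: "(\<lambda>b. b \<otimes> L) ` B \<subseteq> (\<lambda>a. a \<otimes> (m \<otimes> L)) ` A"
  shows "(\<lambda>u. u \<otimes>\<^bsub>R Quot I\<^esub> (I +> m)) ` ((+>) I ` A) = (+>) I ` B"
proof -
  interpret \<pi>: ring_hom_ring R "R Quot I" "(+>) I"
    by (rule rcos_ring_hom_ring)
  have "(\<lambda>u. u \<otimes>\<^bsub>R Quot I\<^esub> (I +> m)) ` ((+>) I ` A) = (+>) I ` ((\<lambda>a. a \<otimes> m) ` A)"
    unfolding image_image using assms(1,3) by (intro image_cong) auto
  also have "\<dots> = (+>) I ` B"
  proof
    show "(+>) I ` ((\<lambda>a. a \<otimes> m) ` A) \<subseteq> (+>) I ` B"
      using into by blast
    show "(+>) I ` B \<subseteq> (+>) I ` ((\<lambda>a. a \<otimes> m) ` A)"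
    proof
      fix u assume "u \<in> (+>) I ` B"
      then obtain b where b: "b \<in> B" "u = I +> b"
        by blast
      then obtain a where a: "a \<in> A" "b \<otimes> L = a \<otimes> (m \<otimes> L)"
        using onto by blast
      have carrier: "b \<in> carrier R" "a \<otimes> m \<in> carrier R"
        using a(1) b(1) assms(1-3) by auto
      moreover have "b \<otimes> L = (a \<otimes> m) \<otimes> L"
        using a(2) carrier assms(1,3) a(1) L_closed by (auto simp: m_assoc)
      ultimately have "I +> b = I +> (a \<otimes> m)"
        using rcos_annihilator_eq_iff by blast
      then show "u \<in> (+>) I ` ((\<lambda>a. a \<otimes> m) ` A)"
        using a b by blast
    qed
  qed
  finally show ?thesis .
qed

end

locale graded_artinian =
  fixes R (structure) and K :: "'a set" and G :: "nat \<Rightarrow> 'a set"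
  assumes graded_artinian_algebra: "graded_artinian_algebra R K G"

sublocale graded_artinian \<subseteq> cring R
  using graded_artinian_algebra by (simp add: graded_artinian_algebra_def)

context graded_artinian
begin

lemma subfield_K: "subfield K R"
  and finite_dimension_carrier: "finite_dimension K (carrier R)"
  and subalgebra_homogeneous: "subalgebra K (G i) R"
  and homogeneous_mult: "a \<in> G i \<Longrightarrow> b \<in> G k \<Longrightarrow> a \<otimes> b \<in> G (i + k)"
  and homogeneous_0_eq: "G 0 = K"
  and ex1_graded_decomposition: "\<forall>x \<in> carrier R. \<exists>!f. graded_decomposition R G x f"
  using graded_artinian_algebra
  by (simp_all add: graded_artinian_algebra_def graded_decomposition_def)

lemma homogeneous_subset_carrier: "G i \<subseteq> carrier R"
  using subalgebra_in_carrier[OF subalgebra_homogeneous] .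

lemma zero_homogeneous: "\<zero> \<in> G i"
  using subgroup.one_closed[OF subalgebra.axioms(1)[OF subalgebra_homogeneous]] by simp

lemma one_homogeneous: "\<one> \<in> G 0"
  using homogeneous_0_eq subringE(3)[OF subfieldE(1)[OF subfield_K]] by simp

lemma homogeneous_pow: "a \<in> G d \<Longrightarrow> a [^] (k::nat) \<in> G (k * d)"
proof (induction k)
  case 0
  then show ?case
    using one_homogeneous by simp
next
  case (Suc k)
  then have "a [^] k \<otimes> a \<in> G (k * d + d)"
    by (intro homogeneous_mult)
  then show ?case
    by (simp add: add.commute)
qed

lemma homogeneous_components_unique:
  assumes "finite S" "inj_on \<delta> S"
    and c: "\<And>i. i \<in> S \<Longrightarrow> c i \<in> G (\<delta> i)" and d: "\<And>i. i \<in> S \<Longrightarrow> d i \<in> G (\<delta> i)"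
    and "finsum R c S = finsum R d S" "i \<in> S"
  shows "c i = d i"
proof -
  let ?inv = "the_inv_into S \<delta>"
  have reindex: "finsum R (\<lambda>k. e (?inv k)) (\<delta> ` S) = finsum R e S"
    if "\<And>i. i \<in> S \<Longrightarrow> e i \<in> G (\<delta> i)" for e
  proof -
    have e_carrier: "\<And>i. i \<in> S \<Longrightarrow> e i \<in> carrier R"
      using that homogeneous_subset_carrier by blast
    have "finsum R (\<lambda>k. e (?inv k)) (\<delta> ` S) = finsum R (\<lambda>i. e (?inv (\<delta> i))) S"
      by (rule finsum_reindex) (use assms(2) e_carrier in \<open>auto simp: the_inv_into_f_f\<close>)
    also have "\<dots> = finsum R e S"
      by (rule finsum_cong') (use assms(2) e_carrier in \<open>auto simp: the_inv_into_f_f\<close>)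
    finally show ?thesis .
  qed
  have "c (?inv (\<delta> i)) = d (?inv (\<delta> i))"
  proof (rule graded_decomposition_unique_components[OF ex1_graded_decomposition])
    show "finsum R (\<lambda>k. c (?inv k)) (\<delta> ` S) = finsum R (\<lambda>k. d (?inv k)) (\<delta> ` S)"
      using reindex[OF c] reindex[OF d] assms(5) by simp
  qed (use assms c d in \<open>auto simp: zero_homogeneous homogeneous_subset_carrier the_inv_into_f_f\<close>)
  then show ?thesis
    using assms(2,6) by (simp add: the_inv_into_f_f)
qed

text \<open>That is, the annihilator of a homogeneous element is a homogeneous ideal.\<close>

lemma Quot_annihilator_homogeneous_components_unique:
  assumes L: "L \<in> G e"
    and "finite S"
    and u: "\<And>i. i \<in> S \<Longrightarrow> u i \<in> a_r_coset R (annihilator R L) ` G i"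
    and v: "\<And>i. i \<in> S \<Longrightarrow> v i \<in> a_r_coset R (annihilator R L) ` G i"
    and sums: "finsum (R Quot annihilator R L) u S = finsum (R Quot annihilator R L) v S"
    and "i \<in> S"
  shows "u i = v i"
proof -
  interpret annihilator_quotient R L
    using L homogeneous_subset_carrier by unfold_locales blast
  interpret \<pi>: ring_hom_ring R "R Quot I" "(+>) I"
    by (rule rcos_ring_hom_ring)
  have lift: "finsum (R Quot I) w S = I +> finsum R r S"
    if "\<forall>i \<in> S. r i \<in> G i \<and> I +> r i = w i" for r w
  proof -
    have r_carrier: "r \<in> S \<rightarrow> carrier R"
      using that homogeneous_subset_carrier by blast
    have "(+>) I \<circ> r \<in> S \<rightarrow> carrier (R Quot I)"
      using r_carrier by (auto simp: carrier_FactRing)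
    then have "finsum (R Quot I) w S = finsum (R Quot I) ((+>) I \<circ> r) S"
      by (rule \<pi>.S.add.finprod_cong'[OF refl]) (use that in auto)
    also have "\<dots> = I +> finsum R r S"
      by (rule \<pi>.hom_finsum[symmetric]) (fact r_carrier)
    finally show ?thesis .
  qed
  obtain r where r: "\<forall>i \<in> S. r i \<in> G i \<and> I +> r i = u i"
    using bchoice[of S "\<lambda>i a. a \<in> G i \<and> I +> a = u i"] u by blast
  obtain s where s: "\<forall>i \<in> S. s i \<in> G i \<and> I +> s i = v i"
    using bchoice[of S "\<lambda>i a. a \<in> G i \<and> I +> a = v i"] v by blast
  have r_carrier: "r \<in> S \<rightarrow> carrier R" and s_carrier: "s \<in> S \<rightarrow> carrier R"
    using r s homogeneous_subset_carrier by blast+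
  have "I +> finsum R r S = I +> finsum R s S"
    using lift[OF r] lift[OF s] sums by simp
  then have "finsum R r S \<otimes> L = finsum R s S \<otimes> L"
    using rcos_annihilator_eq_iff[OF finsum_closed[OF r_carrier] finsum_closed[OF s_carrier]] by blast
  then have "finsum R (\<lambda>i. r i \<otimes> L) S = finsum R (\<lambda>i. s i \<otimes> L) S"
    using finsum_ldistr[OF assms(2) L_closed] r_carrier s_carrier by simp
  moreover have "inj_on (\<lambda>i. i + e) S"
    by (simp add: inj_on_def)
  moreover have "r i \<otimes> L \<in> G (i + e)" "s i \<otimes> L \<in> G (i + e)" if "i \<in> S" for i
    using r s L homogeneous_mult that by blast+
  ultimately have "r i \<otimes> L = s i \<otimes> L"
    using homogeneous_components_unique[where c = "\<lambda>i. r i \<otimes> L" and d = "\<lambda>i. s i \<otimes> L",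
        OF assms(2)] assms(6) by blast
  then have "I +> r i = I +> s i"
    using rcos_annihilator_eq_iff r_carrier s_carrier assms(6) by auto
  then show ?thesis
    using r s assms(6) by simp
qed

lemma graded_artinian_algebra_Quot_annihilator:
  assumes L: "L \<in> G e" and "L \<noteq> \<zero>"
  shows "graded_artinian_algebra (R Quot annihilator R L)
           (a_r_coset R (annihilator R L) ` K) (\<lambda>i. a_r_coset R (annihilator R L) ` G i)"
proof -
  interpret annihilator_quotient R L
    using L homogeneous_subset_carrier by unfold_locales blast
  interpret \<pi>: ring_hom_ring R "R Quot I" "(+>) I"
    by (rule rcos_ring_hom_ring)
  have nontrivial: "\<one>\<^bsub>R Quot I\<^esub> \<noteq> \<zero>\<^bsub>R Quot I\<^esub>"
    using Quot_annihilator_nontrivial[OF assms(2)] .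
  have Quot_homogeneous_subset_carrier: "(+>) I ` G i \<subseteq> carrier (R Quot I)" for i
    using homogeneous_subset_carrier by (auto simp: carrier_FactRing)
  have decomposition: "\<exists>!f. graded_decomposition (R Quot I) (\<lambda>i. (+>) I ` G i) x f"
    if "x \<in> carrier (R Quot I)" for x
  proof -
    from that have "x \<in> (+>) I ` carrier R"
      by (simp add: carrier_FactRing)
    then obtain a where a: "a \<in> carrier R" "x = I +> a"
      by (rule imageE)
    then obtain f where "graded_decomposition R G a f"
      using ex1_graded_decomposition by blast
    from \<pi>.graded_decomposition_hom[OF this homogeneous_subset_carrier]
    have "graded_decomposition (R Quot I) (\<lambda>i. (+>) I ` G i) x ((+>) I \<circ> f)"
      using a(2) by simp
    then show ?thesis
    proof (rule \<pi>.S.ex1_graded_decompositionI[where D = "\<lambda>i. (+>) I ` G i",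
          OF Quot_homogeneous_subset_carrier])
      show "c i = d i"
        if "finite S" "\<And>i. i \<in> S \<Longrightarrow> c i \<in> (+>) I ` G i" "\<And>i. i \<in> S \<Longrightarrow> d i \<in> (+>) I ` G i"
          "finsum (R Quot I) c S = finsum (R Quot I) d S" "i \<in> S" for S c d i
        using Quot_annihilator_homogeneous_components_unique[OF L that] .
    qed
  qed
  show ?thesis
    unfolding graded_artinian_algebra_def
  proof (intro conjI allI ballI)
    show "cring (R Quot I)"
      by (rule ideal.quotient_is_cring[OF ideal_annihilator is_cring])
    show "subfield ((+>) I ` K) (R Quot I)"
      using \<pi>.img_is_subfield(2)[OF subfield_K nontrivial] .
    show "\<pi>.S.finite_dimension ((+>) I ` K) (carrier (R Quot I))"
      using \<pi>.finite_dimension_hom[OF subfield_K nontrivial finite_dimension_carrier]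
      by (simp add: carrier_FactRing)
    show "subalgebra ((+>) I ` K) ((+>) I ` G i) (R Quot I)" for i
      using \<pi>.img_is_subalgebra[OF subfieldE(3)[OF subfield_K] subalgebra_homogeneous] .
    show "(+>) I ` G 0 = (+>) I ` K"
      by (simp add: homogeneous_0_eq)
    show "u \<otimes>\<^bsub>R Quot I\<^esub> v \<in> (+>) I ` G (i + k)"
      if u: "u \<in> (+>) I ` G i" and v: "v \<in> (+>) I ` G k" for u v i k
    proof -
      obtain a b where ab: "a \<in> G i" "b \<in> G k" "u = I +> a" "v = I +> b"
        using u v by blast
      moreover have "a \<in> carrier R" "b \<in> carrier R"
        using ab(1,2) homogeneous_subset_carrier by blast+
      ultimately have "u \<otimes>\<^bsub>R Quot I\<^esub> v = I +> (a \<otimes> b)"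
        by simp
      then show ?thesis
        using homogeneous_mult[OF ab(1,2)] by blast
    qed
    show "\<exists>!f. (\<forall>i. f i \<in> (+>) I ` G i) \<and> finite {i. f i \<noteq> \<zero>\<^bsub>R Quot I\<^esub>} \<and>
                x = finsum (R Quot I) f {i. f i \<noteq> \<zero>\<^bsub>R Quot I\<^esub>}"
      if "x \<in> carrier (R Quot I)" for x
      using decomposition[OF that] by (simp add: graded_decomposition_def)
  qed
qed

lemma strong_lefschetz_element_Quot_annihilator_pow:
  fixes j :: nat
  assumes "strong_lefschetz_element R G l"
  shows "strong_lefschetz_element (R Quot annihilator R (l [^] j))
           (\<lambda>i. a_r_coset R (annihilator R (l [^] j)) ` G i) (a_r_coset R (annihilator R (l [^] j)) l)"
proof -
  have l: "l \<in> G 1" and l_carrier: "l \<in> carrier R"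
    using assms homogeneous_subset_carrier by (auto simp: strong_lefschetz_element_def)
  interpret annihilator_quotient R "l [^] j"
    using l_carrier by unfold_locales simp
  interpret \<pi>: ring_hom_ring R "R Quot I" "(+>) I"
    by (rule rcos_ring_hom_ring)
  have pow: "(I +> l) [^]\<^bsub>R Quot I\<^esub> k = I +> l [^] k" for k :: nat
    using \<pi>.hom_nat_pow[OF l_carrier] by simp
  have shift: "l [^] k \<otimes> l [^] j = l [^] (k + j)" for k :: nat
    using l_carrier by (simp add: nat_pow_mult)
  show ?thesis
    unfolding strong_lefschetz_element_def pow
  proof (intro conjI allI)
    show "I +> l \<in> (+>) I ` G 1"
      using l by blast
    fix i k :: nat
    have powers: "l [^] k \<in> carrier R" "l [^] k \<in> G k"
      using l_carrier homogeneous_pow[OF l, of k] by simp_all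
    have "inj_on (\<lambda>a. a \<otimes> l [^] (k + j)) (G i)
        \<or> (\<lambda>a. a \<otimes> l [^] (k + j)) ` G i = G (i + (k + j))"
      using assms by (simp add: strong_lefschetz_element_def)
    then show "inj_on (\<lambda>u. u \<otimes>\<^bsub>R Quot I\<^esub> (I +> l [^] k)) ((+>) I ` G i)
        \<or> (\<lambda>u. u \<otimes>\<^bsub>R Quot I\<^esub> (I +> l [^] k)) ` ((+>) I ` G i) = (+>) I ` G (i + k)"
    proof
      assume "inj_on (\<lambda>a. a \<otimes> l [^] (k + j)) (G i)"
      then show ?thesis
        using inj_on_Quot_annihilator_mult[OF homogeneous_subset_carrier powers(1)] shift by simp
    next
      assume onto: "(\<lambda>a. a \<otimes> l [^] (k + j)) ` G i = G (i + (k + j))"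
      have into: "(\<lambda>a. a \<otimes> l [^] k) ` G i \<subseteq> G (i + k)"
        using homogeneous_mult powers(2) by blast
      have "b \<otimes> l [^] j \<in> G (i + (k + j))" if "b \<in> G (i + k)" for b
        using homogeneous_mult[OF that homogeneous_pow[OF l, of j]] by (simp add: add.assoc)
      then have "(\<lambda>b. b \<otimes> l [^] j) ` G (i + k) \<subseteq> (\<lambda>a. a \<otimes> (l [^] k \<otimes> l [^] j)) ` G i"
        unfolding shift onto by blast
      then show ?thesis
        using image_Quot_annihilator_mult[OF homogeneous_subset_carrier homogeneous_subset_carrier
            powers(1) into] by simp
    qed
  qed
qed

end

theorem mainTheorem4:
  fixes R :: "('a, 'b) ring_scheme" and K :: "'a set" and G :: "nat \<Rightarrow> 'a set"
    and l :: 'a and j :: nat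
  assumes "graded_artinian_algebra R K G"
    and "strong_lefschetz_element R G l"
    and "j > 0"
  shows "strong_lefschetz_element (R Quot annihilator R (l [^]\<^bsub>R\<^esub> j))
           (\<lambda>i. a_r_coset R (annihilator R (l [^]\<^bsub>R\<^esub> j)) ` G i)
           (a_r_coset R (annihilator R (l [^]\<^bsub>R\<^esub> j)) l)
       \<and> (l [^]\<^bsub>R\<^esub> j \<noteq> \<zero>\<^bsub>R\<^esub> \<longrightarrow>
           graded_artinian_algebra (R Quot annihilator R (l [^]\<^bsub>R\<^esub> j))
             (a_r_coset R (annihilator R (l [^]\<^bsub>R\<^esub> j)) ` K)
             (\<lambda>i. a_r_coset R (annihilator R (l [^]\<^bsub>R\<^esub> j)) ` G i))"
proof -
  interpret graded_artinian R K G
    by (rule graded_artinian.intro) (fact assms(1))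
  have "l [^]\<^bsub>R\<^esub> j \<in> G j"
    using assms(2) homogeneous_pow[of l 1 j] by (simp add: strong_lefschetz_element_def)
  then show ?thesis
    using strong_lefschetz_element_Quot_annihilator_pow[OF assms(2)]
      graded_artinian_algebra_Quot_annihilator by blast
qed

end
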